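(* For $n\ge3$, $$\mathcal{K}_n(\lambda)=\lambda\,\mathcal{A}_{n-1}(\lambda)-\lambda^2\,\mathcal{A}_{n-3}(\lambda).$$
   Context: For $n\ge3$, $\mathcal{K}_n(\lambda)=\det(\lambda I_n-M_n)$, where $(M_n)_{j,i}=1$ if $i\ge j-1$ or $(j,i)=(n,n-2)$, and $0$ otherwise. For $n\ge1$, $\mathcal{A}_n(\lambda)=\det(\lambda I_n-N_n)$ with $(N_n)_{j,i}=1$ if $i\ge j-1$ and $0$ otherwise; $\mathcal{A}_0(\lambda)=1$. *)

theory Defs
  imports "Jordan_Normal_Form.Char_Poly"
begin

text \<open>Matrices use 0-based indices: entry (j,i) of the paper (1-based) is entry (j-1,i-1) here.
  The condition i \<ge> j - 1 becomes i + 1 \<ge> j, and the extra entry (n, n-2) becomes (n-1, n-3).\<close>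

definition N_mat :: "nat \<Rightarrow> 'a :: comm_ring_1 mat" where
  "N_mat n = mat n n (\<lambda>(j, i). if j \<le> i + 1 then 1 else 0)"

definition M_mat :: "nat \<Rightarrow> 'a :: comm_ring_1 mat" where
  "M_mat n = mat n n (\<lambda>(j, i). if j \<le> i + 1 \<or> (j = n - 1 \<and> i = n - 3) then 1 else 0)"

definition K_poly :: "nat \<Rightarrow> 'a :: comm_ring_1 poly" where
  "K_poly n = char_poly (M_mat n :: 'a mat)"

definition A_poly :: "nat \<Rightarrow> 'a :: comm_ring_1 poly" where
  "A_poly n = char_poly (N_mat n :: 'a mat)"

end

theory Submission
  imports Defs
begin

text \<open>Both \<open>\<lambda>I - N\<^sub>n\<close> and \<open>\<lambda>I - M\<^sub>n\<close> are upper Hessenberg, so expanding along the last row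
  leaves only two (resp. three) terms. Doing this for \<open>\<lambda>I - N\<^sub>m\<close> and for the variant with its last
  column replaced by \<open>-1\<close> yields the recurrence \<open>A(m+2) = \<lambda> A(m+1) - \<lambda> A(m)\<close>; the corner entry of
  \<open>M\<^sub>n\<close> contributes one further minor, and eliminating the auxiliary determinants with that
  recurrence gives the claim. Everything holds with \<open>\<lambda>\<close> replaced by an arbitrary ring element.\<close>

lemma det_last_row_two_terms:
  fixes A :: "'a :: comm_ring_1 mat"
  assumes A: "A \<in> carrier_mat (Suc m) (Suc m)" and m: "m \<ge> 1"
    and zero: "\<And>j. j < m - 1 \<Longrightarrow> A $$ (m, j) = 0"
  shows "det A = A $$ (m, m) * det (mat_delete A m m)
               - A $$ (m, m - 1) * det (mat_delete A m (m - 1))"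
proof -
  obtain p where p: "m = Suc p" using m by (cases m) auto
  have "det A = (\<Sum>j<Suc m. A $$ (m, j) * cofactor A m j)"
    by (rule laplace_expansion_row[OF A]) simp
  also have "\<dots> = (\<Sum>j<p. A $$ (m, j) * cofactor A m j)
      + A $$ (m, p) * cofactor A m p + A $$ (m, m) * cofactor A m m"
    by (simp add: p)
  also have "(\<Sum>j<p. A $$ (m, j) * cofactor A m j) = 0"
    using zero p by (intro sum.neutral) auto
  finally show ?thesis
    by (simp add: cofactor_def p flip: add_Suc_right mult_2)
qed

lemma det_last_row_three_terms:
  fixes A :: "'a :: comm_ring_1 mat"
  assumes A: "A \<in> carrier_mat (Suc m) (Suc m)" and m: "m \<ge> 2"
    and zero: "\<And>j. j < m - 2 \<Longrightarrow> A $$ (m, j) = 0"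
  shows "det A = A $$ (m, m) * det (mat_delete A m m)
               - A $$ (m, m - 1) * det (mat_delete A m (m - 1))
               + A $$ (m, m - 2) * det (mat_delete A m (m - 2))"
proof -
  obtain p where p: "m = Suc (Suc p)" using m by (metis add_2_eq_Suc le_Suc_ex)
  have "det A = (\<Sum>j<Suc m. A $$ (m, j) * cofactor A m j)"
    by (rule laplace_expansion_row[OF A]) simp
  also have "\<dots> = (\<Sum>j<p. A $$ (m, j) * cofactor A m j) + A $$ (m, p) * cofactor A m p
      + A $$ (m, Suc p) * cofactor A m (Suc p) + A $$ (m, m) * cofactor A m m"
    by (simp add: p)
  also have "(\<Sum>j<p. A $$ (m, j) * cofactor A m j) = 0"
    using zero p by (intro sum.neutral) auto
  finally show ?thesis
    by (simp add: cofactor_def p power_add flip: mult_2)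
qed

definition hess_entry :: "'a :: comm_ring_1 \<Rightarrow> nat \<Rightarrow> nat \<Rightarrow> 'a" where
  "hess_entry x j i = (if j = i then x else 0) - (if j \<le> i + 1 then 1 else 0)"

definition hess_mat :: "'a :: comm_ring_1 \<Rightarrow> nat \<Rightarrow> 'a mat" where
  "hess_mat x m = mat m m (\<lambda>(j, i). hess_entry x j i)"

definition hess_mat_last_col :: "'a :: comm_ring_1 \<Rightarrow> nat \<Rightarrow> 'a mat" where
  "hess_mat_last_col x m = mat m m (\<lambda>(j, i). if i = m - 1 then -1 else hess_entry x j i)"

definition hess_mat_corner :: "'a :: comm_ring_1 \<Rightarrow> nat \<Rightarrow> 'a mat" where
  "hess_mat_corner x n =
     mat n n (\<lambda>(j, i). hess_entry x j i - (if j = n - 1 \<and> i = n - 3 then 1 else 0))"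

definition hess_mat_corner_minor :: "'a :: comm_ring_1 \<Rightarrow> nat \<Rightarrow> 'a mat" where
  "hess_mat_corner_minor x m =
     mat m m (\<lambda>(j, i). if i < m - 2 then hess_entry x j i
                       else if i = m - 2 then hess_entry x j (m - 1) else -1)"

lemma hess_mat_carrier [simp]: "hess_mat x m \<in> carrier_mat m m"
  by (simp add: hess_mat_def)

lemma hess_mat_last_col_carrier [simp]: "hess_mat_last_col x m \<in> carrier_mat m m"
  by (simp add: hess_mat_last_col_def)

lemma hess_mat_corner_carrier [simp]: "hess_mat_corner x m \<in> carrier_mat m m"
  by (simp add: hess_mat_corner_def)

lemma hess_mat_corner_minor_carrier [simp]: "hess_mat_corner_minor x m \<in> carrier_mat m m"
  by (simp add: hess_mat_corner_minor_def)

lemma det_hess_mat_Suc: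
  assumes "m \<ge> 1"
  shows "det (hess_mat x (Suc m)) = (x - 1) * det (hess_mat x m) + det (hess_mat_last_col x m)"
proof -
  have "mat_delete (hess_mat x (Suc m)) m m = hess_mat x m"
    by (rule eq_matI) (auto simp: mat_delete_def hess_mat_def)
  moreover have "mat_delete (hess_mat x (Suc m)) m (m - 1) = hess_mat_last_col x m"
    using assms
    by (intro eq_matI) (auto simp: mat_delete_def hess_mat_def hess_mat_last_col_def hess_entry_def)
  ultimately show ?thesis
    using assms by (subst det_last_row_two_terms) (auto simp: hess_mat_def hess_entry_def)
qed

lemma det_hess_mat_last_col_Suc:
  assumes "m \<ge> 1"
  shows "det (hess_mat_last_col x (Suc m)) = det (hess_mat_last_col x m) - det (hess_mat x m)"
proof -
  have "mat_delete (hess_mat_last_col x (Suc m)) m m = hess_mat x m"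
    by (rule eq_matI) (auto simp: mat_delete_def hess_mat_def hess_mat_last_col_def)
  moreover have "mat_delete (hess_mat_last_col x (Suc m)) m (m - 1) = hess_mat_last_col x m"
    using assms by (intro eq_matI) (auto simp: mat_delete_def hess_mat_last_col_def hess_entry_def)
  ultimately show ?thesis
    using assms by (subst det_last_row_two_terms) (auto simp: hess_mat_last_col_def hess_entry_def)
qed

lemma det_hess_mat_corner_minor_Suc:
  assumes "m \<ge> 1"
  shows "det (hess_mat_corner_minor x (Suc m)) = - x * det (hess_mat_last_col x m)"
proof -
  have "mat_delete (hess_mat_corner_minor x (Suc m)) m m = hess_mat_last_col x m"
    and "mat_delete (hess_mat_corner_minor x (Suc m)) m (m - 1) = hess_mat_last_col x m"
    using assms by (auto intro!: eq_matI simp: mat_delete_def hess_mat_corner_minor_def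
        hess_mat_last_col_def hess_entry_def)
  then show ?thesis
    using assms by (subst det_last_row_two_terms)
      (auto simp: hess_mat_corner_minor_def hess_entry_def algebra_simps)
qed

lemma det_hess_mat_corner_Suc:
  assumes "m \<ge> 2"
  shows "det (hess_mat_corner x (Suc m)) = (x - 1) * det (hess_mat x m)
           + det (hess_mat_last_col x m) - det (hess_mat_corner_minor x m)"
proof -
  have "mat_delete (hess_mat_corner x (Suc m)) m m = hess_mat x m"
    and "mat_delete (hess_mat_corner x (Suc m)) m (m - 1) = hess_mat_last_col x m"
    and "mat_delete (hess_mat_corner x (Suc m)) m (m - 2) = hess_mat_corner_minor x m"
    using assms by (auto intro!: eq_matI simp: mat_delete_def hess_mat_corner_def hess_mat_def
        hess_mat_last_col_def hess_mat_corner_minor_def hess_entry_def)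
  then show ?thesis
    using assms by (subst det_last_row_three_terms) (auto simp: hess_mat_corner_def hess_entry_def)
qed

lemma det_hess_mat_Suc_Suc:
  "det (hess_mat x (Suc (Suc m))) = x * det (hess_mat x (Suc m)) - x * det (hess_mat x m)"
proof (cases m)
  case 0
  have "det (hess_mat x 1) = x - 1" and "det (hess_mat_last_col x 1) = -1"
    by (simp_all add: det_single hess_mat_def hess_mat_last_col_def hess_entry_def)
  then show ?thesis
    using 0 det_hess_mat_Suc[of 1 x] by (simp add: algebra_simps)
next
  case (Suc p)
  have "det (hess_mat x (Suc (Suc m)))
      = (x - 1) * det (hess_mat x (Suc m)) + det (hess_mat_last_col x (Suc m))"
    by (rule det_hess_mat_Suc) simp
  also have "\<dots> = (x - 1) * det (hess_mat x (Suc m)) + det (hess_mat_last_col x m) - det (hess_mat x m)"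
    using Suc by (simp add: det_hess_mat_last_col_Suc)
  also have "\<dots> = x * det (hess_mat x (Suc m)) - x * det (hess_mat x m)"
    using Suc det_hess_mat_Suc[of m x] by (simp add: algebra_simps)
  finally show ?thesis .
qed

lemma det_hess_mat_corner:
  "det (hess_mat_corner x (Suc (Suc (Suc p))))
     = x * det (hess_mat x (Suc (Suc p))) - x\<^sup>2 * det (hess_mat x p)"
proof -
  let ?T = "\<lambda>m. det (hess_mat x m)" and ?E = "\<lambda>m. det (hess_mat_last_col x m)"
  have E: "?E (Suc p) = ?T (Suc (Suc p)) - (x - 1) * ?T (Suc p)"
    using det_hess_mat_Suc[of "Suc p" x] by simp
  have "det (hess_mat_corner x (Suc (Suc (Suc p))))
      = (x - 1) * ?T (Suc (Suc p)) - ?T (Suc p) + (x + 1) * ?E (Suc p)"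
    using det_hess_mat_corner_Suc[of "Suc (Suc p)" x] det_hess_mat_last_col_Suc[of "Suc p" x]
      det_hess_mat_corner_minor_Suc[of "Suc p" x]
    by (simp add: algebra_simps)
  also have "\<dots> = x * ?T (Suc (Suc p)) + x * (?T (Suc (Suc p)) - x * ?T (Suc p))"
    unfolding E by (simp add: algebra_simps)
  also have "\<dots> = x * ?T (Suc (Suc p)) - x\<^sup>2 * ?T p"
    unfolding det_hess_mat_Suc_Suc by (simp add: algebra_simps power2_eq_square)
  finally show ?thesis .
qed

lemma poly_const_neg_one: "[:- 1:] = (- 1 :: 'a :: comm_ring_1 poly)"
  by (simp add: poly_eq_iff coeff_pCons split: nat.split)

lemma poly_X_minus_one: "pCons (- 1) 1 = [:0, 1:] - (1 :: 'a :: comm_ring_1 poly)"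
  by (simp add: poly_eq_iff coeff_pCons split: nat.split)

lemma A_poly_eq_det_hess_mat: "A_poly m = det (hess_mat [:0, 1:] m)"
  unfolding A_poly_def char_poly_def char_poly_matrix_def
  by (rule arg_cong[where f = det], rule eq_matI) (auto simp: N_mat_def hess_mat_def hess_entry_def
      poly_const_neg_one poly_X_minus_one)

lemma K_poly_eq_det_hess_mat_corner:
  assumes "n \<ge> 3"
  shows "K_poly n = det (hess_mat_corner [:0, 1:] n)"
  unfolding K_poly_def char_poly_def char_poly_matrix_def
  using assms
  by (intro arg_cong[where f = det] eq_matI) (auto simp: M_mat_def hess_mat_corner_def hess_entry_def
      poly_const_neg_one poly_X_minus_one)

theorem lemma4:
  fixes n :: nat
  assumes "n \<ge> 3"
  shows "(K_poly n :: 'a :: comm_ring_1 poly)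
           = [:0, 1:] * A_poly (n - 1) - [:0, 0, 1:] * A_poly (n - 3)"
proof -
  define p where "p = n - 3"
  have n: "n = Suc (Suc (Suc p))"
    using assms by (simp add: p_def)
  have "[:0, 0, 1:] = ([:0, 1:] :: 'a poly)\<^sup>2"
    by (simp add: power2_eq_square)
  then show ?thesis
    using assms det_hess_mat_corner[of "[:0, 1:] :: 'a poly" p]
    by (simp add: n K_poly_eq_det_hess_mat_corner A_poly_eq_det_hess_mat)
qed

end
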